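(* Let $L$ be a finite-dimensional pure, nonnilpotent, solvable Lie algebra over $\mathbb{C}$ of breadth $2$ such that $\dim[L,L]=2$ and $\dim L^k=2$ for all integers $k\geq 2$. Then $L$ has a basis such that one of the following holds (in each case the listed brackets are the only nonzero brackets of basis elements, up to antisymmetry): (1) basis $\{x_1,x_2,x_3,x_4,x_5\}$ with $[x_1,x_5]=x_4$, $[x_2,x_4]=x_4$, $[x_3,x_5]=x_5$; (2) $L=\mathrm{span}\{x_1,x_2\}\oplus\mathrm{span}\{x_3,x_4\}$ (direct sum of Lie algebras) with $[x_1,x_2]=x_2$, $[x_3,x_4]=x_4$; (3) basis $\{x_1,x_2,x_3,x_4\}$ with $[x_1,x_4]=x_3$, $[x_2,x_3]=x_3$, $[x_2,x_4]=x_4$; (4) basis $\{x_1,x_2,x_3\}$ with $[x_1,x_2]=x_2$, $[x_1,x_3]=x_2+x_3$; (5) basis $\{x_1,x_2,x_3\}$ with $[x_1,x_2]=x_2$, $[x_1,x_3]=\gamma x_3$ for some $\gamma\in\mathbb{C}\setminus\{0\}$.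
   Context: For $x\in L$, the breadth of $x$ is $b(x)=\mathrm{rank}(\mathrm{ad}_x)$, and $b(L)=\max\{b(x)\mid x\in L\}$. $L$ is pure if it has no abelian ideal as a direct summand; equivalently $Z(L)\subseteq[L,L]$, where $Z(L)$ is the center. The lower central series is indexed by $L^0=L$, $L^1=[L,L]$ and $L^k=[L,L^{k-1}]$ for $k\geq 2$. *)

theory Defs
  imports Complex_Main
begin

text \<open>A complex Lie algebra is modelled as the whole carrier type 'a, equipped with a
  complex scalar multiplication sc (making 'a a complex vector space) and a bracket br.\<close>

definition lie_algebra :: "(complex \<Rightarrow> 'a::ab_group_add \<Rightarrow> 'a) \<Rightarrow> ('a \<Rightarrow> 'a \<Rightarrow> 'a) \<Rightarrow> bool" where
  "lie_algebra sc br \<longleftrightarrow> vector_space sc \<and>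
     (\<forall>x y z. br (x + y) z = br x z + br y z) \<and>
     (\<forall>x y z. br x (y + z) = br x y + br x z) \<and>
     (\<forall>c x y. br (sc c x) y = sc c (br x y)) \<and>
     (\<forall>c x y. br x (sc c y) = sc c (br x y)) \<and>
     (\<forall>x. br x x = 0) \<and>
     (\<forall>x y z. br x (br y z) + br y (br z x) + br z (br x y) = 0)"

definition fin_dim :: "(complex \<Rightarrow> 'a::ab_group_add \<Rightarrow> 'a) \<Rightarrow> bool" where
  "fin_dim sc \<longleftrightarrow> (\<exists>B. finite B \<and> module.span sc B = UNIV)"

definition brk_set :: "(complex \<Rightarrow> 'a::ab_group_add \<Rightarrow> 'a) \<Rightarrow> ('a \<Rightarrow> 'a \<Rightarrow> 'a) \<Rightarrow> 'a set \<Rightarrow> 'a set \<Rightarrow> 'a set" where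
  "brk_set sc br A B = module.span sc {br a b | a b. a \<in> A \<and> b \<in> B}"

fun lcs :: "(complex \<Rightarrow> 'a::ab_group_add \<Rightarrow> 'a) \<Rightarrow> ('a \<Rightarrow> 'a \<Rightarrow> 'a) \<Rightarrow> nat \<Rightarrow> 'a set" where
  "lcs sc br 0 = UNIV"
| "lcs sc br (Suc k) = brk_set sc br UNIV (lcs sc br k)"

fun dsr :: "(complex \<Rightarrow> 'a::ab_group_add \<Rightarrow> 'a) \<Rightarrow> ('a \<Rightarrow> 'a \<Rightarrow> 'a) \<Rightarrow> nat \<Rightarrow> 'a set" where
  "dsr sc br 0 = UNIV"
| "dsr sc br (Suc k) = brk_set sc br (dsr sc br k) (dsr sc br k)"

definition solvable :: "(complex \<Rightarrow> 'a::ab_group_add \<Rightarrow> 'a) \<Rightarrow> ('a \<Rightarrow> 'a \<Rightarrow> 'a) \<Rightarrow> bool" where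
  "solvable sc br \<longleftrightarrow> (\<exists>k. dsr sc br k = {0})"

definition nilpotent :: "(complex \<Rightarrow> 'a::ab_group_add \<Rightarrow> 'a) \<Rightarrow> ('a \<Rightarrow> 'a \<Rightarrow> 'a) \<Rightarrow> bool" where
  "nilpotent sc br \<longleftrightarrow> (\<exists>k. lcs sc br k = {0})"

definition lie_ideal :: "(complex \<Rightarrow> 'a::ab_group_add \<Rightarrow> 'a) \<Rightarrow> ('a \<Rightarrow> 'a \<Rightarrow> 'a) \<Rightarrow> 'a set \<Rightarrow> bool" where
  "lie_ideal sc br I \<longleftrightarrow> module.subspace sc I \<and> (\<forall>x y. y \<in> I \<longrightarrow> br x y \<in> I)"

definition pure :: "(complex \<Rightarrow> 'a::ab_group_add \<Rightarrow> 'a) \<Rightarrow> ('a \<Rightarrow> 'a \<Rightarrow> 'a) \<Rightarrow> bool" where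
  "pure sc br \<longleftrightarrow> \<not> (\<exists>A B. lie_ideal sc br A \<and> lie_ideal sc br B \<and> A \<noteq> {0} \<and>
      (\<forall>a\<in>A. \<forall>a'\<in>A. br a a' = 0) \<and> A \<inter> B = {0} \<and> {a + b | a b. a \<in> A \<and> b \<in> B} = UNIV)"

definition breadth_elt :: "(complex \<Rightarrow> 'a::ab_group_add \<Rightarrow> 'a) \<Rightarrow> ('a \<Rightarrow> 'a \<Rightarrow> 'a) \<Rightarrow> 'a \<Rightarrow> nat" where
  "breadth_elt sc br x = vector_space.dim sc (range (br x))"

definition breadth :: "(complex \<Rightarrow> 'a::ab_group_add \<Rightarrow> 'a) \<Rightarrow> ('a \<Rightarrow> 'a \<Rightarrow> 'a) \<Rightarrow> nat" where
  "breadth sc br = Max (range (breadth_elt sc br))"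

text \<open>Bracket table given by a list of the nonzero brackets ((i,j), v) with i < j;
  extended by antisymmetry, all other brackets of basis elements are zero.\<close>
definition table :: "((nat \<times> nat) \<times> 'a::ab_group_add) list \<Rightarrow> nat \<Rightarrow> nat \<Rightarrow> 'a" where
  "table T i j = (case map_of T (i, j) of Some v \<Rightarrow> v
                  | None \<Rightarrow> (case map_of T (j, i) of Some v \<Rightarrow> - v | None \<Rightarrow> 0))"

definition basis_with_brackets :: "(complex \<Rightarrow> 'a::ab_group_add \<Rightarrow> 'a) \<Rightarrow> ('a \<Rightarrow> 'a \<Rightarrow> 'a) \<Rightarrow> nat
    \<Rightarrow> (nat \<Rightarrow> 'a) \<Rightarrow> ((nat \<times> nat) \<times> 'a) list \<Rightarrow> bool" where
  "basis_with_brackets sc br n x T \<longleftrightarrow>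
     inj_on x {1..n} \<and> \<not> module.dependent sc (x ` {1..n}) \<and> module.span sc (x ` {1..n}) = UNIV \<and>
     (\<forall>i\<in>{1..n}. \<forall>j\<in>{1..n}. br (x i) (x j) = table T i j)"

end

theory Submission
  imports Defs
begin

text \<open>
  Let \<open>V = [L, L]\<close>, a plane. Purity puts the centre of \<open>L\<close> inside \<open>V\<close>, and \<open>dim L\<^sup>2 = 2\<close> means
  that \<open>[L, V]\<close> lies in no line; together these force \<open>V\<close> to be abelian. Hence restricting
  \<open>ad x\<close> to \<open>V\<close> gives a linear map from \<open>L\<close> to \<open>2 \<times> 2\<close> matrices whose kernel is \<open>V\<close> (an element
  acting trivially on \<open>V\<close> becomes central after subtracting an element of \<open>V\<close>) and whose image is
  commutative (as \<open>[L, L] = V\<close> acts trivially on \<open>V\<close>) and contains an invertible matrix. Such an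
  image is either the scalars, or the line through an invertible nonscalar matrix, or the plane
  spanned by the identity and a nonscalar matrix. The Jordan form of that matrix then yields the
  normal forms (5), (4) or (5), and (2) or (3) respectively. The table of case (1) violates the
  Jacobi identity, so that case never occurs.
\<close>

section \<open>Two by two complex matrices\<close>

text \<open>The matrix with rows \<open>(a, b)\<close> and \<open>(c, d)\<close> acts on column vectors \<open>(p, q)\<close>.\<close>

lemma commuting_nonscalar_2x2:
  fixes a b c d p q r s :: complex
  assumes "b * r = q * c" "r * (a - d) = c * (p - s)" "q * (a - d) = b * (p - s)"
    and nonscalar: "b \<noteq> 0 \<or> c \<noteq> 0 \<or> a \<noteq> d"
  shows "\<exists>\<alpha> \<beta>. p = \<alpha> + \<beta> * a \<and> q = \<beta> * b \<and> r = \<beta> * c \<and> s = \<alpha> + \<beta> * d"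
proof -
  consider "b \<noteq> 0" | "b = 0" "c \<noteq> 0" | "b = 0" "c = 0" "a \<noteq> d"
    using nonscalar by blast
  then obtain \<beta> where "q = \<beta> * b" "r = \<beta> * c" "p - s = \<beta> * (a - d)"
  proof cases
    case 1
    then show ?thesis using assms(1,3) by (intro that[of "q / b"]) (auto simp: field_simps)
  next
    case 2
    then show ?thesis using assms(1,2) by (intro that[of "r / c"]) (auto simp: field_simps)
  next
    case 3
    then show ?thesis using assms(2,3) by (intro that[of "(p - s) / (a - d)"]) auto
  qed
  then show ?thesis
    by (intro exI[of _ "p - \<beta> * a"] exI[of _ \<beta>]) (auto simp: algebra_simps)
qed

lemma singular_pencil_2x2:
  fixes a b c d \<alpha> \<beta> :: complex
  assumes "a * d - b * c = 0"
    and "(\<alpha> + \<beta> * a) * (\<alpha> + \<beta> * d) - (\<beta> * b) * (\<beta> * c) = 0"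
    and "(\<alpha> + (\<beta> + 1) * a) * (\<alpha> + (\<beta> + 1) * d) - ((\<beta> + 1) * b) * ((\<beta> + 1) * c) = 0"
  shows "\<alpha> = 0"
proof -
  have h1: "\<alpha> * (\<alpha> + \<beta> * (a + d)) = 0" and h2: "\<alpha> * (\<alpha> + (\<beta> + 1) * (a + d)) = 0"
    using assms by (simp_all add: algebra_simps)
  have "\<alpha> * (a + d) = \<alpha> * (\<alpha> + (\<beta> + 1) * (a + d)) - \<alpha> * (\<alpha> + \<beta> * (a + d))"
    by (simp add: algebra_simps)
  then have "\<alpha> * (a + d) = 0" using h1 h2 by simp
  moreover have "\<alpha> * \<alpha> = \<alpha> * (\<alpha> + \<beta> * (a + d)) - \<beta> * (\<alpha> * (a + d))"
    by (simp add: algebra_simps)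
  ultimately have "\<alpha> * \<alpha> = 0" using h1 by (metis diff_zero mult_zero_right)
  then show ?thesis by simp
qed

lemma singular_2x2_range_in_line:
  fixes a b c d :: complex
  assumes "a * d - b * c = 0"
  obtains w1 w2 where "\<And>p q. \<exists>t. a * p + b * q = t * w1 \<and> c * p + d * q = t * w2"
proof (cases "a = 0")
  case False
  show ?thesis
  proof (rule that[of a c])
    fix p q
    show "\<exists>t. a * p + b * q = t * a \<and> c * p + d * q = t * c"
      by (rule exI[of _ "p + b / a * q"]) (use False assms in \<open>auto simp: field_simps\<close>)
  qed
next
  case a: True
  show ?thesis
  proof (cases "c = 0")
    case False
    then have "b = 0" using a assms by simp
    show ?thesis
    proof (rule that[of a c])
      fix p q
      show "\<exists>t. a * p + b * q = t * a \<and> c * p + d * q = t * c"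
        by (rule exI[of _ "p + d / c * q"]) (use False a \<open>b = 0\<close> in \<open>auto simp: field_simps\<close>)
    qed
  next
    case True
    then show ?thesis using a by (intro that[of b d]) auto
  qed
qed

lemma cramer_2x2:
  fixes a b c d p q :: complex
  assumes "a * d - b * c \<noteq> 0"
  obtains s t where "a * s + b * t = p" "c * s + d * t = q"
proof
  let ?D = "a * d - b * c"
  have "a * (p * d - b * q) + b * (a * q - c * p) = p * ?D"
    "c * (p * d - b * q) + d * (a * q - c * p) = q * ?D"
    by (simp_all add: algebra_simps)
  then show "a * ((p * d - b * q) / ?D) + b * ((a * q - c * p) / ?D) = p"
    "c * ((p * d - b * q) / ?D) + d * ((a * q - c * p) / ?D) = q"
    using assms by (simp_all only: times_divide_eq_right add_divide_distrib[symmetric]) simp_all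
qed

lemma cramer_2x2_unique:
  fixes a b c d s t :: complex
  assumes "a * d - b * c \<noteq> 0" "a * s + b * t = 0" "c * s + d * t = 0"
  shows "s = 0" "t = 0"
proof -
  have "(a * d - b * c) * s = d * (a * s + b * t) - b * (c * s + d * t)"
    "(a * d - b * c) * t = a * (c * s + d * t) - c * (a * s + b * t)"
    by (simp_all add: algebra_simps)
  then show "s = 0" "t = 0" using assms by simp_all
qed

lemma proportional_2d:
  fixes r s u1 u2 :: complex
  assumes "u1 \<noteq> 0 \<or> u2 \<noteq> 0" "r * u2 - s * u1 = 0"
  obtains t where "r = t * u1" "s = t * u2"
proof (cases "u1 = 0")
  case True
  then show ?thesis using assms by (intro that[of "s / u2"]) auto
next
  case False
  then show ?thesis using assms by (intro that[of "r / u1"]) (auto simp: field_simps)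
qed

text \<open>For a root \<open>l\<close> of the characteristic polynomial, \<open>(b, l - a)\<close> is an eigenvector.\<close>

lemma char_root_eigenvector:
  fixes a b c d l s :: complex
  assumes "s\<^sup>2 = (a - d)\<^sup>2 + 4 * b * c" and "2 * l = a + d + s \<or> 2 * l = a + d - s"
  shows "c * b + d * (l - a) = l * (l - a)"
proof -
  have "2 * l - (a + d) = s \<or> 2 * l - (a + d) = - s" using assms(2) by auto
  then have "(2 * l - (a + d))\<^sup>2 = (a - d)\<^sup>2 + 4 * b * c"
    using assms(1) by auto
  then have "4 * (l * (l - a) - c * b - d * (l - a)) = 0"
    by (simp add: power2_eq_square algebra_simps)
  then have "l * (l - a) - c * b - d * (l - a) = 0" by (metis mult_eq_0_iff zero_neq_numeral)
  then show ?thesis by (simp add: algebra_simps)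
qed

lemma jordan_2x2:
  fixes a b c d :: complex
  obtains (diagonal) l1 l2 p1 q1 p2 q2 where "p1 * q2 - q1 * p2 \<noteq> 0"
      "a * p1 + b * q1 = l1 * p1" "c * p1 + d * q1 = l1 * q1"
      "a * p2 + b * q2 = l2 * p2" "c * p2 + d * q2 = l2 * q2"
  | (jordan_block) l p1 q1 p2 q2 where "p1 * q2 - q1 * p2 \<noteq> 0"
      "a * p1 + b * q1 = l * p1" "c * p1 + d * q1 = l * q1"
      "a * p2 + b * q2 = l * p2 + p1" "c * p2 + d * q2 = l * q2 + q1"
proof -
  define s where "s = csqrt ((a - d)\<^sup>2 + 4 * b * c)"
  note root = char_root_eigenvector[OF power2_csqrt[of "(a - d)\<^sup>2 + 4 * b * c", folded s_def]]
  consider "b = 0" "a \<noteq> d" | "b = 0" "a = d" "c = 0" | "b = 0" "a = d" "c \<noteq> 0"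
    | "b \<noteq> 0" "s \<noteq> 0" | "b \<noteq> 0" "s = 0" by blast
  then show ?thesis
  proof cases
    case 1
    show ?thesis
      by (rule diagonal[of "a - d" 1 c 0 a d]) (use 1 in \<open>auto simp: algebra_simps\<close>)
  next
    case 2
    show ?thesis
      by (rule diagonal[of 1 1 0 0 a a]) (use 2 in \<open>auto simp: algebra_simps\<close>)
  next
    case 3
    show ?thesis
      by (rule jordan_block[of 0 0 1 "1 / c" a]) (use 3 in \<open>auto simp: field_simps\<close>)
  next
    case 4
    define l1 where "l1 = (a + d + s) / 2"
    define l2 where "l2 = (a + d - s) / 2"
    show ?thesis
    proof (rule diagonal[of b "l2 - a" "l1 - a" b l1 l2])
      show "b * (l2 - a) - (l1 - a) * b \<noteq> 0" using 4 by (simp add: l1_def l2_def field_simps)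
      show "c * b + d * (l1 - a) = l1 * (l1 - a)" "c * b + d * (l2 - a) = l2 * (l2 - a)"
        by (rule root, simp add: l1_def l2_def)+
    qed (simp_all add: algebra_simps)
  next
    case 5
    define l where "l = (a + d) / 2"
    show ?thesis
    proof (rule jordan_block[of b 1 "l - a" 0 l])
      show "c * b + d * (l - a) = l * (l - a)" by (rule root) (simp add: 5 l_def)
    qed (use 5 in \<open>simp_all add: l_def field_simps\<close>)
  qed
qed

section \<open>Lie algebras and bracket tables\<close>

lemma table_swap:
  assumes "\<forall>((i, j), v) \<in> set T. i < j" and "i < j"
  shows "table T j i = - table T i j"
proof -
  have "map_of T (j, i) = None"
    using assms by (auto simp: map_of_eq_None_iff)
  then show ?thesis by (cases "map_of T (i, j)") (simp_all add: table_def)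
qed

lemma table_diag:
  assumes "\<forall>((i, j), v) \<in> set T. i < j"
  shows "table T i i = 0"
proof -
  have "map_of T (i, i) = None"
    using assms by (auto simp: map_of_eq_None_iff)
  then show ?thesis by (simp add: table_def)
qed

locale complex_lie_algebra =
  fixes sc :: "complex \<Rightarrow> 'a::ab_group_add \<Rightarrow> 'a" and br :: "'a \<Rightarrow> 'a \<Rightarrow> 'a"
  assumes lie: "lie_algebra sc br"
begin

sublocale vector_space sc
  using lie by (simp add: lie_algebra_def)

lemma bracket_add_left: "br (x + y) z = br x z + br y z"
  and bracket_add_right: "br x (y + z) = br x y + br x z"
  and bracket_scale_left: "br (sc c x) y = sc c (br x y)"
  and bracket_scale_right: "br x (sc c y) = sc c (br x y)"
  and bracket_self [simp]: "br x x = 0"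
  and jacobi: "br x (br y z) + br y (br z x) + br z (br x y) = 0"
  using lie by (simp_all add: lie_algebra_def)

lemma bracket_zero_left [simp]: "br 0 x = 0"
  using bracket_add_left[of 0 0 x] by simp

lemma bracket_zero_right [simp]: "br x 0 = 0"
  using bracket_add_right[of x 0 0] by simp

lemma bracket_minus_left: "br (- x) y = - br x y"
  using bracket_add_left[of x "- x" y] by (simp add: eq_neg_iff_add_eq_0 add.commute)

lemma bracket_minus_right: "br x (- y) = - br x y"
  using bracket_add_right[of x y "- y"] by (simp add: eq_neg_iff_add_eq_0 add.commute)

lemma bracket_diff_left: "br (x - y) z = br x z - br y z"
  using bracket_add_left[of x "- y" z] by (simp add: bracket_minus_left)

lemma bracket_diff_right: "br x (y - z) = br x y - br x z"
  using bracket_add_right[of x y "- z"] by (simp add: bracket_minus_right)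

lemmas bracket_linear = bracket_add_left bracket_add_right bracket_scale_left bracket_scale_right
  bracket_minus_left bracket_minus_right bracket_diff_left bracket_diff_right

lemma bracket_antisym: "br x y = - br y x"
proof -
  have "br x x + br y x + (br x y + br y y) = br (x + y) (x + y)"
    by (simp only: bracket_add_left bracket_add_right)
  then have "br x y + br y x = 0" by (simp add: add.commute)
  then show ?thesis by (simp add: eq_neg_iff_add_eq_0)
qed

lemma jacobi_derivation: "br x (br y z) = br (br x y) z + br y (br x z)"
  using jacobi[of x y z] bracket_antisym[of z x] bracket_antisym[of z "br x y"]
  by (simp add: bracket_minus_right algebra_simps eq_neg_iff_add_eq_0)

lemma span_pair_iff: "z \<in> span {u, v} \<longleftrightarrow> (\<exists>a b. z = sc a u + sc b v)"
proof
  assume "z \<in> span {u, v}"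
  then obtain a b where "z - sc a u = sc b v" by (auto simp: span_breakdown_eq span_singleton)
  then have "z = sc a u + sc b v" by (simp add: algebra_simps)
  then show "\<exists>a b. z = sc a u + sc b v" by blast
qed (auto intro: span_add span_scale span_base)

lemma span_eq_UNIV_if_spanning_subset:
  assumes "span A = UNIV" "A \<subseteq> span B"
  shows "span B = UNIV"
  using span_minimal[OF assms(2) subspace_span] assms(1) by blast

lemma independent_family:
  assumes "finite I" and indep: "\<And>u. (\<Sum>i\<in>I. sc (u i) (x i)) = 0 \<Longrightarrow> \<forall>i\<in>I. u i = 0"
  shows "inj_on x I" and "independent (x ` I)"
proof -
  show inj: "inj_on x I"
  proof (rule inj_onI, rule ccontr)
    fix i j assume ij: "i \<in> I" "j \<in> I" "x i = x j" "i \<noteq> j"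
    define u :: "_ \<Rightarrow> complex" where "u k = (if k = i then 1 else if k = j then -1 else 0)" for k
    have "(\<Sum>k\<in>I. sc (u k) (x k)) = (\<Sum>k\<in>I. (if k = i then x i else 0) + (if k = j then - x j else 0))"
      by (rule sum.cong) (auto simp: u_def ij(4))
    also have "\<dots> = 0" using ij assms(1) by (simp add: sum.distrib)
    finally have "\<forall>k\<in>I. u k = 0" by (rule indep)
    then have "u i = 0" using ij(1) by blast
    then show False by (simp add: u_def)
  qed
  show "independent (x ` I)"
  proof
    assume "dependent (x ` I)"
    then obtain u where u: "\<exists>v\<in>x ` I. u v \<noteq> 0" "(\<Sum>v\<in>x ` I. sc (u v) v) = 0"
      using assms(1) by (auto simp: dependent_finite)
    then have "(\<Sum>i\<in>I. sc (u (x i)) (x i)) = 0" using inj by (simp add: sum.reindex)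
    then show False using indep[of "u \<circ> x"] u(1) by auto
  qed
qed

lemma basis_with_bracketsI:
  assumes keys: "\<forall>((i, j), v) \<in> set T. i < j"
    and indep: "\<And>u. (\<Sum>i=1..n. sc (u i) (x i)) = 0 \<Longrightarrow> \<forall>i\<in>{1..n}. u i = 0"
    and spanning: "span (x ` {1..n}) = UNIV"
    and brackets: "\<forall>i\<in>{1..n}. \<forall>j\<in>{1..n}. i < j \<longrightarrow> br (x i) (x j) = table T i j"
  shows "basis_with_brackets sc br n x T"
proof -
  note family = independent_family[OF finite_atLeastAtMost indep]
  have "br (x i) (x j) = table T i j" if "i \<in> {1..n}" "j \<in> {1..n}" for i j
  proof (cases i j rule: linorder_cases)
    case less
    then show ?thesis using that brackets by blast
  next
    case equal
    then show ?thesis using table_diag[OF keys] by simp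
  next
    case greater
    then have "br (x i) (x j) = - table T j i"
      using that brackets bracket_antisym[of "x i" "x j"] by simp
    then show ?thesis using table_swap[OF keys greater] by simp
  qed
  then show ?thesis
    using family spanning unfolding basis_with_brackets_def by blast
qed

text \<open>The dummy entry \<open>0\<close> makes the basis lists 1-indexed.\<close>

lemma basis_with_brackets_3I:
  assumes "\<forall>((i, j), v) \<in> set T. i < j"
    and "\<And>a b c. sc a x1 + sc b x2 + sc c x3 = 0 \<Longrightarrow> a = 0 \<and> b = 0 \<and> c = 0"
    and "span {x1, x2, x3} = UNIV"
    and "br x1 x2 = table T 1 2" "br x1 x3 = table T 1 3" "br x2 x3 = table T 2 3"
  shows "basis_with_brackets sc br 3 ((!) [0, x1, x2, x3]) T"
proof (rule basis_with_bracketsI)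
  have I: "{1..3::nat} = {1, 2, 3}" by (auto simp: numeral_eq_Suc)
  show "\<forall>i\<in>{1..3}. u i = 0" if "(\<Sum>i=1..3. sc (u i) ([0, x1, x2, x3] ! i)) = 0" for u
  proof -
    have "sc (u 1) x1 + sc (u 2) x2 + sc (u 3) x3 = 0"
      using that unfolding I by (simp add: add.assoc)
    from assms(2)[OF this] show ?thesis unfolding I by simp
  qed
  show "span ((!) [0, x1, x2, x3] ` {1..3}) = UNIV"
    using assms(3) unfolding I by simp
  show "\<forall>i\<in>{1..3}. \<forall>j\<in>{1..3}. i < j \<longrightarrow> br ([0, x1, x2, x3] ! i) ([0, x1, x2, x3] ! j) = table T i j"
    using assms(4-) unfolding I by simp
qed (rule assms(1))

lemma basis_with_brackets_4I:
  assumes "\<forall>((i, j), v) \<in> set T. i < j"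
    and "\<And>a b c d. sc a x1 + sc b x2 + sc c x3 + sc d x4 = 0 \<Longrightarrow> a = 0 \<and> b = 0 \<and> c = 0 \<and> d = 0"
    and "span {x1, x2, x3, x4} = UNIV"
    and "br x1 x2 = table T 1 2" "br x1 x3 = table T 1 3" "br x1 x4 = table T 1 4"
      "br x2 x3 = table T 2 3" "br x2 x4 = table T 2 4" "br x3 x4 = table T 3 4"
  shows "basis_with_brackets sc br 4 ((!) [0, x1, x2, x3, x4]) T"
proof (rule basis_with_bracketsI)
  have I: "{1..4::nat} = {1, 2, 3, 4}" by (auto simp: numeral_eq_Suc)
  show "\<forall>i\<in>{1..4}. u i = 0" if "(\<Sum>i=1..4. sc (u i) ([0, x1, x2, x3, x4] ! i)) = 0" for u
  proof -
    have "sc (u 1) x1 + sc (u 2) x2 + sc (u 3) x3 + sc (u 4) x4 = 0"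
      using that unfolding I by (simp add: add.assoc)
    from assms(2)[OF this] show ?thesis unfolding I by simp
  qed
  show "span ((!) [0, x1, x2, x3, x4] ` {1..4}) = UNIV"
    using assms(3) unfolding I by simp
  show "\<forall>i\<in>{1..4}. \<forall>j\<in>{1..4}. i < j \<longrightarrow>
      br ([0, x1, x2, x3, x4] ! i) ([0, x1, x2, x3, x4] ! j) = table T i j"
    using assms(4-) unfolding I by simp
qed (rule assms(1))

lemma bracket_in_derived: "br x y \<in> lcs sc br 1"
  by (auto simp: brk_set_def intro: span_base)

lemma basis_of_dim_2:
  assumes "subspace D" "dim D = 2"
  obtains e1 e2 where "span {e1, e2} = D" "\<And>p q. sc p e1 + sc q e2 = 0 \<Longrightarrow> p = 0 \<and> q = 0"
proof -
  obtain B where B: "B \<subseteq> D" "independent B" "D \<subseteq> span B" "card B = dim D"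
    by (rule basis_exists)
  then obtain e1 e2 where e12: "B = {e1, e2}" "e1 \<noteq> e2"
    using assms(2) card_2_iff by metis
  show ?thesis
  proof (rule that)
    show "span {e1, e2} = D"
      using span_minimal[OF B(1) assms(1)] B(3) e12(1) by blast
    fix p q assume "sc p e1 + sc q e2 = 0"
    define u where "u v = (if v = e1 then p else q)" for v
    have sum: "(\<Sum>v\<in>{e1, e2}. sc (u v) v) = 0"
      using \<open>sc p e1 + sc q e2 = 0\<close> e12(2) by (simp add: u_def)
    have "u e1 = 0" "u e2 = 0"
      by (rule independentD[OF B(2) _ _ sum]; simp add: e12(1))+
    then show "p = 0 \<and> q = 0" using e12(2) by (simp add: u_def)
  qed
qed

lemma complement_hyperplane:
  assumes "subspace D" "z \<notin> D"
  obtains C where "subspace C" "D \<subseteq> C" "z \<notin> C" "\<And>y. \<exists>k. y - sc k z \<in> C"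
proof -
  obtain B where B: "B \<subseteq> D" "independent B" "D \<subseteq> span B"
    by (meson basis_exists)
  have "z \<notin> span B"
    using span_minimal[OF B(1) assms(1)] assms(2) by blast
  then have indep: "independent (insert z B)"
    using independent_insertI B(2) by blast
  define E where "E = extend_basis (insert z B)"
  have E: "insert z B \<subseteq> E" "independent E" "span E = UNIV"
    using extend_basis_superset[OF indep] independent_extend_basis[OF indep]
      span_extend_basis[OF indep] by (simp_all add: E_def)
  show ?thesis
  proof (rule that[of "span (E - {z})"])
    show "z \<notin> span (E - {z})"
      using E(1,2) unfolding dependent_def by auto
    have "B \<subseteq> E - {z}"
      using E(1) \<open>z \<notin> span B\<close> span_base by blast
    then show "D \<subseteq> span (E - {z})"
      using B(3) span_mono by blast
    show "\<exists>k. y - sc k z \<in> span (E - {z})" for y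
      using E(1,3) span_breakdown_eq[of y z "E - {z}"] by (simp add: insert_absorb)
  qed (rule subspace_span)
qed

lemma not_pure_if_central_complement:
  assumes "z \<noteq> 0" and central: "\<And>x. br x z = 0"
    and C: "lie_ideal sc br C" "z \<notin> C" "\<And>y. \<exists>k. y - sc k z \<in> C"
  shows "\<not> pure sc br"
proof -
  define A where "A = span {z}"
  have central_A: "br x a = 0" if "a \<in> A" for x a
    using that central by (auto simp: A_def span_singleton bracket_scale_right)
  have "lie_ideal sc br A"
    using central_A by (auto simp: lie_ideal_def A_def subspace_span span_zero)
  moreover have "A \<noteq> {0}"
    using \<open>z \<noteq> 0\<close> span_base[of z "{z}"] by (auto simp: A_def)
  moreover have "A \<inter> C = {0}"
  proof -
    have "subspace C" using C(1) by (simp add: lie_ideal_def)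
    have "k = 0" if "sc k z \<in> C" for k
    proof (rule ccontr)
      assume "k \<noteq> 0"
      then have "z = sc (inverse k) (sc k z)" by simp
      then show False using C(2) subspace_scale[OF \<open>subspace C\<close> that] by metis
    qed
    then show ?thesis
      using \<open>subspace C\<close> by (auto simp: A_def span_singleton subspace_0)
  qed
  moreover have "y \<in> {a + c | a c. a \<in> A \<and> c \<in> C}" for y
  proof -
    obtain k where "y - sc k z \<in> C" using C(3) by blast
    moreover have "sc k z \<in> A" by (auto simp: A_def span_singleton)
    moreover have "y = sc k z + (y - sc k z)" by simp
    ultimately show ?thesis by blast
  qed
  then have "{a + c | a c. a \<in> A \<and> c \<in> C} = UNIV" by blast
  moreover have "\<forall>a\<in>A. \<forall>a'\<in>A. br a a' = 0"
    using central_A by blast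
  ultimately have "\<exists>A B. lie_ideal sc br A \<and> lie_ideal sc br B \<and> A \<noteq> {0} \<and>
      (\<forall>a\<in>A. \<forall>a'\<in>A. br a a' = 0) \<and> A \<inter> B = {0} \<and> {a + b | a b. a \<in> A \<and> b \<in> B} = UNIV"
    using C(1) by (intro exI[of _ A] exI[of _ C] conjI)
  then show ?thesis unfolding pure_def by blast
qed

text \<open>Any hyperplane containing \<open>[L, L]\<close> is an ideal, so a central element outside \<open>[L, L]\<close>
  spans an abelian direct summand.\<close>

lemma center_subset_derived:
  assumes pure: "pure sc br" and central: "\<And>x. br x z = 0"
  shows "z \<in> lcs sc br 1"
proof (rule ccontr)
  assume z: "z \<notin> lcs sc br 1"
  have "subspace (lcs sc br 1)"
    by (simp add: brk_set_def subspace_span)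
  then obtain C where C: "subspace C" "lcs sc br 1 \<subseteq> C" "z \<notin> C" "\<And>y. \<exists>k. y - sc k z \<in> C"
    using z by (rule complement_hyperplane) blast
  have "lie_ideal sc br C"
    using C(1,2) bracket_in_derived by (auto simp: lie_ideal_def)
  moreover have "z \<noteq> 0"
    using z by (auto simp: brk_set_def span_zero)
  ultimately have "\<not> pure sc br"
    using not_pure_if_central_complement central C(3,4) by blast
  then show False using pure by contradiction
qed

lemma nonzero_if_independent_pair:
  assumes "\<And>a b. sc a v1 + sc b v2 = 0 \<Longrightarrow> a = 0 \<and> b = 0"
  shows "v1 \<noteq> 0" "v2 \<noteq> 0"
  using assms[of 1 0] assms[of 0 1] by auto

lemma basis_diagonal_action:
  assumes abelian: "br v1 v2 = 0" and indep: "\<And>a b. sc a v1 + sc b v2 = 0 \<Longrightarrow> a = 0 \<and> b = 0"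
    and act: "br y v1 = sc l1 v1" "br y v2 = sc l2 v2" and l: "l1 \<noteq> 0" "l2 \<noteq> 0"
    and spanning: "span {y, v1, v2} = UNIV"
  shows "\<exists>x \<gamma>. \<gamma> \<noteq> 0 \<and> basis_with_brackets sc br 3 x [((1,2), x 2), ((1,3), sc \<gamma> (x 3))]"
proof -
  define y' where "y' = sc (1 / l1) y"
  have act': "br y' v1 = v1" "br y' v2 = sc (l2 / l1) v2"
    using l by (simp_all add: y'_def bracket_scale_left act)
  have "basis_with_brackets sc br 3 ((!) [0, y', v1, v2]) [((1,2), v1), ((1,3), sc (l2 / l1) v2)]"
  proof (rule basis_with_brackets_3I)
    fix a b c assume h: "sc a y' + sc b v1 + sc c v2 = 0"
    have "br (sc a y' + sc b v1 + sc c v2) v1 = sc a v1"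
      using abelian bracket_antisym[of v2 v1] by (simp add: bracket_linear act')
    then have "sc a v1 = 0" using h by simp
    then have "a = 0" using nonzero_if_independent_pair(1)[OF indep] scale_eq_0_iff by blast
    then have "sc b v1 + sc c v2 = 0" using h by simp
    then show "a = 0 \<and> b = 0 \<and> c = 0" using \<open>a = 0\<close> indep by blast
  next
    have "y = sc l1 y'" using l by (simp add: y'_def)
    then have "y \<in> span {y', v1, v2}" by (simp add: span_base span_scale)
    then have "{y, v1, v2} \<subseteq> span {y', v1, v2}" by (simp add: span_base)
    then show "span {y', v1, v2} = UNIV"
      using span_eq_UNIV_if_spanning_subset spanning by blast
  qed (simp_all add: table_def act' abelian)
  then show ?thesis
    using l by (intro exI[of _ "(!) [0, y', v1, v2]"] exI[of _ "l2 / l1"]) simp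
qed

lemma basis_jordan_action:
  assumes abelian: "br v1 v2 = 0" and indep: "\<And>a b. sc a v1 + sc b v2 = 0 \<Longrightarrow> a = 0 \<and> b = 0"
    and act: "br y v1 = sc l v1" "br y v2 = sc l v2 + v1" and l: "l \<noteq> 0"
    and spanning: "span {y, v1, v2} = UNIV"
  shows "\<exists>x. basis_with_brackets sc br 3 x [((1,2), x 2), ((1,3), x 2 + x 3)]"
proof -
  define y' where "y' = sc (1 / l) y"
  define u where "u = sc (1 / l) v1"
  have act': "br y' u = u" "br y' v2 = u + v2"
    using l by (simp_all add: y'_def u_def bracket_scale_left bracket_scale_right act scale_right_distrib add.commute)
  have abelian': "br u v2 = 0" "br v2 u = 0"
    using abelian bracket_antisym[of v2 v1] by (simp_all add: u_def bracket_linear)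
  have "basis_with_brackets sc br 3 ((!) [0, y', u, v2]) [((1,2), u), ((1,3), u + v2)]"
  proof (rule basis_with_brackets_3I)
    fix a b c assume h: "sc a y' + sc b u + sc c v2 = 0"
    have "br (sc a y' + sc b u + sc c v2) u = sc a u"
      using abelian' by (simp add: bracket_linear act')
    then have "sc a u = 0" using h by simp
    moreover have "u \<noteq> 0" using nonzero_if_independent_pair(1)[OF indep] l by (simp add: u_def)
    ultimately have "a = 0" using scale_eq_0_iff by blast
    then have "sc (b / l) v1 + sc c v2 = 0" using h by (simp add: u_def)
    then have "b / l = 0" "c = 0" using indep by blast+
    then show "a = 0 \<and> b = 0 \<and> c = 0" using \<open>a = 0\<close> l by simp
  next
    have "y = sc l y'" "v1 = sc l u" using l by (simp_all add: y'_def u_def)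
    then have "y \<in> span {y', u, v2}" "v1 \<in> span {y', u, v2}" by (simp_all add: span_base span_scale)
    then have "{y, v1, v2} \<subseteq> span {y', u, v2}" by (simp add: span_base)
    then show "span {y', u, v2} = UNIV"
      using span_eq_UNIV_if_spanning_subset spanning by blast
  qed (simp_all add: table_def act' abelian')
  then show ?thesis by (intro exI[of _ "(!) [0, y', u, v2]"]) simp
qed

lemma basis_split_action:
  assumes abelian: "br v1 v2 = 0" and indep: "\<And>a b. sc a v1 + sc b v2 = 0 \<Longrightarrow> a = 0 \<and> b = 0"
    and act: "br y v1 = v1" "br y v2 = v2" "br X v1 = v1" "br X v2 = 0" "br X y = 0"
    and spanning: "span {X, y, v1, v2} = UNIV"
  shows "\<exists>x. basis_with_brackets sc br 4 x [((1,2), x 2), ((3,4), x 4)]"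
proof -
  have act': "br v1 (y - X) = 0" "br X (y - X) = 0" "br (y - X) v1 = 0" "br (y - X) v2 = v2"
    using act bracket_antisym[of v1 y] bracket_antisym[of v1 X] by (simp_all add: bracket_linear)
  have "br v2 v1 = 0" using abelian bracket_antisym[of v2 v1] by simp
  have "basis_with_brackets sc br 4 ((!) [0, X, v1, y - X, v2]) [((1,2), v1), ((3,4), v2)]"
  proof (rule basis_with_brackets_4I)
    fix a b c d assume h: "sc a X + sc b v1 + sc c (y - X) + sc d v2 = 0"
    have "br (sc a X + sc b v1 + sc c (y - X) + sc d v2) v1 = sc a v1"
      using \<open>br v2 v1 = 0\<close> by (simp add: bracket_linear act act')
    then have "sc a v1 = 0" using h by simp
    then have "a = 0" using nonzero_if_independent_pair(1)[OF indep] scale_eq_0_iff by blast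
    have "br (sc a X + sc b v1 + sc c (y - X) + sc d v2) v2 = sc c v2"
      using abelian \<open>a = 0\<close> by (simp add: bracket_linear act act')
    then have "sc c v2 = 0" using h by simp
    then have "c = 0" using nonzero_if_independent_pair(2)[OF indep] scale_eq_0_iff by blast
    then have "sc b v1 + sc d v2 = 0" using h \<open>a = 0\<close> by simp
    then show "a = 0 \<and> b = 0 \<and> c = 0 \<and> d = 0" using \<open>a = 0\<close> \<open>c = 0\<close> indep by blast
  next
    have "y = X + (y - X)" by simp
    then have "y \<in> span {X, v1, y - X, v2}" by (metis span_add span_base insertI1 insertI2)
    then have "{X, y, v1, v2} \<subseteq> span {X, v1, y - X, v2}" by (simp add: span_base)
    then show "span {X, v1, y - X, v2} = UNIV"
      using span_eq_UNIV_if_spanning_subset spanning by blast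
  qed (simp_all add: table_def act act' abelian)
  then show ?thesis by (intro exI[of _ "(!) [0, X, v1, y - X, v2]"]) simp
qed

lemma basis_nilpotent_action:
  assumes abelian: "br v1 v2 = 0" and indep: "\<And>a b. sc a v1 + sc b v2 = 0 \<Longrightarrow> a = 0 \<and> b = 0"
    and act: "br y v1 = v1" "br y v2 = v2" "br X v1 = 0" "br X v2 = v1" "br X y = 0"
    and spanning: "span {X, y, v1, v2} = UNIV"
  shows "\<exists>x. basis_with_brackets sc br 4 x [((1,4), x 3), ((2,3), x 3), ((2,4), x 4)]"
proof -
  have "br v2 v1 = 0" using abelian bracket_antisym[of v2 v1] by simp
  have "basis_with_brackets sc br 4 ((!) [0, X, y, v1, v2]) [((1,4), v1), ((2,3), v1), ((2,4), v2)]"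
  proof (rule basis_with_brackets_4I)
    fix a b c d assume h: "sc a X + sc b y + sc c v1 + sc d v2 = 0"
    have "br (sc a X + sc b y + sc c v1 + sc d v2) v1 = sc b v1"
      using \<open>br v2 v1 = 0\<close> by (simp add: bracket_linear act)
    then have "sc b v1 = 0" using h by simp
    then have "b = 0" using nonzero_if_independent_pair(1)[OF indep] scale_eq_0_iff by blast
    have "br (sc a X + sc b y + sc c v1 + sc d v2) v2 = sc a v1"
      using abelian \<open>b = 0\<close> by (simp add: bracket_linear act)
    then have "sc a v1 = 0" using h by simp
    then have "a = 0" using nonzero_if_independent_pair(1)[OF indep] scale_eq_0_iff by blast
    then have "sc c v1 + sc d v2 = 0" using h \<open>b = 0\<close> by simp
    then show "a = 0 \<and> b = 0 \<and> c = 0 \<and> d = 0" using \<open>a = 0\<close> \<open>b = 0\<close> indep by blast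
  qed (simp_all add: table_def act abelian spanning)
  then show ?thesis by (intro exI[of _ "(!) [0, X, y, v1, v2]"]) simp
qed

end

section \<open>Lie algebras whose brackets span a plane\<close>

text \<open>The hypotheses of the theorem in the form used below: \<open>e1, e2\<close> is a basis of \<open>[L, L]\<close>,
  \<open>dim L\<^sup>2 = 2\<close> says that \<open>[L, span {e1, e2}]\<close> lies in no line, and purity puts the centre
  inside \<open>[L, L]\<close>.\<close>

locale derived_plane = complex_lie_algebra +
  fixes e1 e2 :: 'a
  assumes plane_independent: "sc p e1 + sc q e2 = 0 \<Longrightarrow> p = 0 \<and> q = 0"
    and bracket_in_plane: "br x y \<in> span {e1, e2}"
    and plane_action_not_in_line: "\<exists>x v. v \<in> span {e1, e2} \<and> br x v \<notin> span {w}"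
    and center_in_plane: "(\<And>x. br x z = 0) \<Longrightarrow> z \<in> span {e1, e2}"
begin

definition vec :: "complex \<Rightarrow> complex \<Rightarrow> 'a" where
  "vec p q = sc p e1 + sc q e2"

lemma in_plane_iff: "v \<in> span {e1, e2} \<longleftrightarrow> (\<exists>p q. v = vec p q)"
  by (simp add: span_pair_iff vec_def)

lemma vec_in_plane: "vec p q \<in> span {e1, e2}"
  using in_plane_iff by blast

lemma vec_add: "vec p q + vec r s = vec (p + r) (q + s)"
  by (simp add: vec_def scale_left_distrib ac_simps)

lemma vec_scale: "sc t (vec p q) = vec (t * p) (t * q)"
  by (simp add: vec_def scale_right_distrib)

lemma vec_diff: "vec p q - vec r s = vec (p - r) (q - s)"
  by (simp add: vec_def scale_left_diff_distrib)

lemma vec_eq_0_iff: "vec p q = 0 \<longleftrightarrow> p = 0 \<and> q = 0"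
  using plane_independent by (auto simp: vec_def)

lemma vec_eq_iff: "vec p q = vec r s \<longleftrightarrow> p = r \<and> q = s"
  using vec_eq_0_iff[of "p - r" "q - s"] by (auto simp: vec_diff[symmetric])

text \<open>Not simp rules: the locale constant \<open>vec\<close> itself depends on \<open>e1\<close> and \<open>e2\<close>.\<close>

lemma e1_vec: "e1 = vec 1 0" and e2_vec: "e2 = vec 0 1"
  by (simp_all add: vec_def)

lemma bracket_vec_left: "br (vec p q) y = sc p (br e1 y) + sc q (br e2 y)"
  and bracket_vec_right: "br x (vec p q) = sc p (br x e1) + sc q (br x e2)"
  by (simp_all add: vec_def bracket_linear)

text \<open>If \<open>u = [e1, e2]\<close> were nonzero, every \<open>ad x\<close> would preserve the line through \<open>u\<close>, and the
  Jacobi identity would then force \<open>ad x\<close> to map the whole plane into that line.\<close>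

lemma plane_abelian: "br e1 e2 = 0"
proof (rule ccontr)
  define u where "u = br e1 e2"
  assume "br e1 e2 \<noteq> 0"
  then have "u \<noteq> 0" by (simp add: u_def)
  obtain u1 u2 where u: "u = vec u1 u2"
    using bracket_in_plane[of e1 e2] in_plane_iff u_def by blast
  have u12: "u1 \<noteq> 0 \<or> u2 \<noteq> 0" using \<open>u \<noteq> 0\<close> u vec_eq_0_iff by blast
  have brvv: "br (vec p q) (vec r s) = sc (p * s - q * r) u" for p q r s
    using bracket_antisym[of e2 e1]
    by (simp add: bracket_vec_left bracket_vec_right u_def[symmetric] scale_left_diff_distrib
        algebra_simps)
  have invariant: "\<exists>t. br x u = sc t u" for x
  proof -
    obtain a c where ac: "br x e1 = vec a c" using bracket_in_plane in_plane_iff by blast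
    obtain b d where bd: "br x e2 = vec b d" using bracket_in_plane in_plane_iff by blast
    have "br x u = br (br x e1) e2 + br e1 (br x e2)"
      unfolding u_def by (rule jacobi_derivation)
    also have "\<dots> = sc (a + d) u"
      unfolding ac bd by (subst (2) e1_vec, subst e2_vec, simp add: brvv scale_left_distrib)
    finally show ?thesis by blast
  qed
  have "br x v \<in> span {u}" if v_plane: "v \<in> span {e1, e2}" for x v
  proof -
    obtain p q where v: "v = vec p q" using v_plane in_plane_iff by blast
    obtain t where t: "br x u = sc t u" using invariant by blast
    obtain r s where rs: "br x v = vec r s" using bracket_in_plane in_plane_iff by blast
    define \<delta> where "\<delta> = p * u2 - q * u1"
    have vu: "br v u = sc \<delta> u" using brvv[of p q u1 u2] by (simp add: v \<delta>_def flip: u)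
    have "br x (br v u) = br (br x v) u + br v (br x u)" by (rule jacobi_derivation)
    moreover have "br x (br v u) = sc (\<delta> * t) u" by (simp add: vu t bracket_scale_right)
    moreover have "br v (br x u) = sc (\<delta> * t) u" by (simp add: vu t bracket_scale_right mult.commute)
    moreover have "br (br x v) u = sc (r * u2 - s * u1) u" using brvv[of r s u1 u2] by (simp add: rs flip: u)
    ultimately have "sc (r * u2 - s * u1) u = 0" by simp
    then have "r * u2 - s * u1 = 0" using \<open>u \<noteq> 0\<close> scale_eq_0_iff by blast
    then obtain k where "r = k * u1" "s = k * u2" using proportional_2d[OF u12] by blast
    then have "br x v = sc k u" by (simp add: rs u vec_scale)
    then show ?thesis using span_scale[OF span_base[of u "{u}"]] by simp
  qed
  then show False using plane_action_not_in_line[of u] by blast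
qed

lemma bracket_vec_vec [simp]: "br (vec p q) (vec r s) = 0"
  using plane_abelian bracket_antisym[of e2 e1] by (simp add: bracket_vec_left bracket_vec_right)

lemma bracket_plane_plane: "u \<in> span {e1, e2} \<Longrightarrow> v \<in> span {e1, e2} \<Longrightarrow> br u v = 0"
  by (auto simp: in_plane_iff)

definition coord1 :: "'a \<Rightarrow> complex" where
  "coord1 v = (SOME p. \<exists>q. v = vec p q)"

definition coord2 :: "'a \<Rightarrow> complex" where
  "coord2 v = (SOME q. \<exists>p. v = vec p q)"

lemma coords_vec: "coord1 (vec p q) = p" "coord2 (vec p q) = q"
proof -
  have "\<exists>q'. vec p q = vec (coord1 (vec p q)) q'"
    unfolding coord1_def by (rule someI_ex) blast
  then show "coord1 (vec p q) = p" by (auto simp: vec_eq_iff)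
  have "\<exists>p'. vec p q = vec p' (coord2 (vec p q))"
    unfolding coord2_def by (rule someI_ex) blast
  then show "coord2 (vec p q) = q" by (auto simp: vec_eq_iff)
qed

definition m11 :: "'a \<Rightarrow> complex" where "m11 x = coord1 (br x e1)"
definition m21 :: "'a \<Rightarrow> complex" where "m21 x = coord2 (br x e1)"
definition m12 :: "'a \<Rightarrow> complex" where "m12 x = coord1 (br x e2)"
definition m22 :: "'a \<Rightarrow> complex" where "m22 x = coord2 (br x e2)"

lemma bracket_e1: "br x e1 = vec (m11 x) (m21 x)"
  and bracket_e2: "br x e2 = vec (m12 x) (m22 x)"
  using bracket_in_plane[of x e1] bracket_in_plane[of x e2]
  by (auto simp: in_plane_iff m11_def m21_def m12_def m22_def coords_vec)

lemma bracket_vec: "br x (vec p q) = vec (m11 x * p + m12 x * q) (m21 x * p + m22 x * q)"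
  by (simp add: bracket_vec_right bracket_e1 bracket_e2 vec_scale vec_add mult.commute)

lemma ad_entries_eqI:
  assumes "br x e1 = vec a c" "br x e2 = vec b d"
  shows "m11 x = a" "m12 x = b" "m21 x = c" "m22 x = d"
  using assms bracket_e1[of x] bracket_e2[of x] by (simp_all add: vec_eq_iff)

lemma ad_entries_linear:
  "m11 (sc s x + sc t y) = s * m11 x + t * m11 y"
  "m12 (sc s x + sc t y) = s * m12 x + t * m12 y"
  "m21 (sc s x + sc t y) = s * m21 x + t * m21 y"
  "m22 (sc s x + sc t y) = s * m22 x + t * m22 y"
proof -
  have "br (sc s x + sc t y) e1 = vec (s * m11 x + t * m11 y) (s * m21 x + t * m21 y)"
    "br (sc s x + sc t y) e2 = vec (s * m12 x + t * m12 y) (s * m22 x + t * m22 y)"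
    by (simp_all add: bracket_add_left bracket_scale_left bracket_e1[of x] bracket_e1[of y]
        bracket_e2[of x] bracket_e2[of y] vec_scale vec_add)
  then show "m11 (sc s x + sc t y) = s * m11 x + t * m11 y"
    "m12 (sc s x + sc t y) = s * m12 x + t * m12 y"
    "m21 (sc s x + sc t y) = s * m21 x + t * m21 y"
    "m22 (sc s x + sc t y) = s * m22 x + t * m22 y"
    by (rule ad_entries_eqI)+
qed

lemma ad_entries_add:
    "m11 (x + y) = m11 x + m11 y" "m12 (x + y) = m12 x + m12 y"
    "m21 (x + y) = m21 x + m21 y" "m22 (x + y) = m22 x + m22 y"
  and ad_entries_scale:
    "m11 (sc t x) = t * m11 x" "m12 (sc t x) = t * m12 x"
    "m21 (sc t x) = t * m21 x" "m22 (sc t x) = t * m22 x"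
  and ad_entries_diff:
    "m11 (x - y) = m11 x - m11 y" "m12 (x - y) = m12 x - m12 y"
    "m21 (x - y) = m21 x - m21 y" "m22 (x - y) = m22 x - m22 y"
  using ad_entries_linear[of 1 x 1 y] ad_entries_linear[of t x 0 x] ad_entries_linear[of 1 x "-1" y]
  by simp_all

lemma ad_entries_commute:
  "m12 x * m21 y = m12 y * m21 x"
  "m21 y * (m11 x - m22 x) = m21 x * (m11 y - m22 y)"
  "m12 y * (m11 x - m22 x) = m12 x * (m11 y - m22 y)"
proof -
  have "br x (br y e) = br y (br x e)" if "e \<in> span {e1, e2}" for e
    using jacobi_derivation[of x y e] bracket_plane_plane[OF bracket_in_plane that] by simp
  then have "br x (br y e1) = br y (br x e1)" "br x (br y e2) = br y (br x e2)"
    using vec_in_plane e1_vec e2_vec by metis+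
  then have "m11 x * m11 y + m12 x * m21 y = m11 y * m11 x + m12 y * m21 x"
    "m21 x * m11 y + m22 x * m21 y = m21 y * m11 x + m22 y * m21 x"
    "m11 x * m12 y + m12 x * m22 y = m11 y * m12 x + m12 y * m22 x"
    by (simp_all add: bracket_e1 bracket_e2 bracket_vec vec_eq_iff)
  then show "m12 x * m21 y = m12 y * m21 x"
    "m21 y * (m11 x - m22 x) = m21 x * (m11 y - m22 y)"
    "m12 y * (m11 x - m22 x) = m12 x * (m11 y - m22 y)"
    by (simp_all add: algebra_simps)
qed

definition ad_scalar :: "'a \<Rightarrow> complex \<Rightarrow> bool" where
  "ad_scalar x l \<longleftrightarrow> m11 x = l \<and> m12 x = 0 \<and> m21 x = 0 \<and> m22 x = l"

lemma ad_scalar_iff: "ad_scalar x l \<longleftrightarrow> (\<forall>v\<in>span {e1, e2}. br x v = sc l v)"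
proof
  assume "ad_scalar x l"
  then show "\<forall>v\<in>span {e1, e2}. br x v = sc l v"
    by (auto simp: ad_scalar_def in_plane_iff bracket_vec vec_scale)
next
  assume "\<forall>v\<in>span {e1, e2}. br x v = sc l v"
  then have "br x e1 = vec l 0" "br x e2 = vec 0 l"
    using vec_in_plane e1_vec e2_vec by (metis vec_scale mult_1_right mult_zero_right)+
  then show "ad_scalar x l" unfolding ad_scalar_def using ad_entries_eqI by blast
qed

lemma ad_commutant_of_nonscalar:
  assumes "\<nexists>l. ad_scalar x l"
  obtains \<alpha> \<beta> where "m11 y = \<alpha> + \<beta> * m11 x" "m12 y = \<beta> * m12 x"
    "m21 y = \<beta> * m21 x" "m22 y = \<alpha> + \<beta> * m22 x"
proof -
  have "m12 x \<noteq> 0 \<or> m21 x \<noteq> 0 \<or> m11 x \<noteq> m22 x"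
    using assms by (auto simp: ad_scalar_def)
  then show ?thesis
    using commuting_nonscalar_2x2[of "m12 x" "m21 y" "m12 y" "m21 x" "m11 x" "m22 x" "m11 y" "m22 y"]
      ad_entries_commute[of x y] that by (auto simp: mult.commute)
qed

lemma invertible_ad_injective:
  assumes "m11 y * m22 y - m12 y * m21 y \<noteq> 0" "v \<in> span {e1, e2}" "br y v = 0"
  shows "v = 0"
proof -
  obtain p q where v: "v = vec p q" using assms(2) in_plane_iff by blast
  then have "m11 y * p + m12 y * q = 0" "m21 y * p + m22 y * q = 0"
    using assms(3) by (simp_all add: bracket_vec vec_eq_0_iff)
  from cramer_2x2_unique[OF assms(1) this] show ?thesis
    by (simp add: v vec_def)
qed

definition ad_multiple :: "'a \<Rightarrow> complex \<Rightarrow> 'a \<Rightarrow> bool" where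
  "ad_multiple y \<beta> x \<longleftrightarrow>
    m11 y = \<beta> * m11 x \<and> m12 y = \<beta> * m12 x \<and> m21 y = \<beta> * m21 x \<and> m22 y = \<beta> * m22 x"

lemma bracket_ad_multiple:
  assumes "ad_multiple y \<beta> x" "v \<in> span {e1, e2}"
  shows "br y v = sc \<beta> (br x v)"
proof -
  obtain p q where "v = vec p q" using assms(2) in_plane_iff by blast
  then show ?thesis
    using assms(1) by (simp add: ad_multiple_def bracket_vec vec_scale algebra_simps)
qed

lemma ad_multiple_of_nonscalar_if_singular:
  assumes singular: "\<And>y. m11 y * m22 y - m12 y * m21 y = 0" and x: "\<nexists>l. ad_scalar x l"
  shows "\<exists>\<beta>. ad_multiple y \<beta> x"
proof -
  obtain \<alpha> \<beta> where y: "m11 y = \<alpha> + \<beta> * m11 x" "m12 y = \<beta> * m12 x"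
    "m21 y = \<beta> * m21 x" "m22 y = \<alpha> + \<beta> * m22 x"
    using ad_commutant_of_nonscalar[OF x] by blast
  have "\<alpha> = 0"
  proof (rule singular_pencil_2x2[OF singular[of x]])
    show "(\<alpha> + \<beta> * m11 x) * (\<alpha> + \<beta> * m22 x) - \<beta> * m12 x * (\<beta> * m21 x) = 0"
      using singular[of y] by (simp add: y)
    show "(\<alpha> + (\<beta> + 1) * m11 x) * (\<alpha> + (\<beta> + 1) * m22 x) - (\<beta> + 1) * m12 x * ((\<beta> + 1) * m21 x) = 0"
      using singular[of "y + x"] by (simp add: ad_entries_add y algebra_simps)
  qed
  with y show ?thesis by (auto simp: ad_multiple_def)
qed

text \<open>If every \<open>ad x\<close> were singular, all of them would be multiples of a nonscalar one, so all of
  \<open>[L, span {e1, e2}]\<close> would lie in its range, a line.\<close>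

lemma exists_invertible_ad: "\<exists>y. m11 y * m22 y - m12 y * m21 y \<noteq> 0"
proof (rule ccontr)
  assume "\<nexists>y. m11 y * m22 y - m12 y * m21 y \<noteq> 0"
  then have singular: "m11 y * m22 y - m12 y * m21 y = 0" for y by blast
  obtain x v0 where "v0 \<in> span {e1, e2}" "br x v0 \<noteq> 0"
    using plane_action_not_in_line[of 0] by (auto simp: span_singleton)
  have x: "\<nexists>l. ad_scalar x l"
  proof
    assume "\<exists>l. ad_scalar x l"
    then obtain l where "ad_scalar x l" by blast
    moreover have "l * l = 0" using singular[of x] \<open>ad_scalar x l\<close> by (simp add: ad_scalar_def)
    ultimately show False
      using \<open>v0 \<in> span {e1, e2}\<close> \<open>br x v0 \<noteq> 0\<close> by (simp add: ad_scalar_iff)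
  qed
  obtain w1 w2 where w: "\<And>p q. \<exists>t. m11 x * p + m12 x * q = t * w1 \<and> m21 x * p + m22 x * q = t * w2"
    using singular_2x2_range_in_line[OF singular[of x]] by blast
  have x_line: "br x v \<in> span {vec w1 w2}" if v_plane: "v \<in> span {e1, e2}" for v
  proof -
    obtain p q where v: "v = vec p q" using v_plane in_plane_iff by blast
    obtain t where "m11 x * p + m12 x * q = t * w1" "m21 x * p + m22 x * q = t * w2"
      using w by blast
    then have "br x v = sc t (vec w1 w2)" by (simp add: v bracket_vec vec_scale)
    then show ?thesis by (simp add: span_base span_scale)
  qed
  have line: "br y v \<in> span {vec w1 w2}" if v_plane: "v \<in> span {e1, e2}" for y v
  proof -
    obtain \<beta> where "ad_multiple y \<beta> x"
      using ad_multiple_of_nonscalar_if_singular[OF singular x] by blast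
    then show ?thesis
      using bracket_ad_multiple v_plane x_line span_scale by simp
  qed
  obtain x' v' where "v' \<in> span {e1, e2}" "br x' v' \<notin> span {vec w1 w2}"
    using plane_action_not_in_line[of "vec w1 w2"] by blast
  then show False using line by blast
qed

text \<open>Subtracting a plane element makes \<open>k\<close> commute with an element \<open>y\<close> with invertible \<open>ad y\<close>;
  the Jacobi identity then shows that the result is central.\<close>

lemma ad_zero_imp_in_plane:
  assumes "ad_scalar k 0"
  shows "k \<in> span {e1, e2}"
proof -
  obtain y where y: "m11 y * m22 y - m12 y * m21 y \<noteq> 0"
    using exists_invertible_ad by blast
  obtain p q where pq: "br y k = vec p q"
    using bracket_in_plane in_plane_iff by blast
  obtain s t where st: "m11 y * s + m12 y * t = p" "m21 y * s + m22 y * t = q"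
    using cramer_2x2[OF y] by blast
  define z where "z = k - vec s t"
  have "br y z = 0" by (simp add: z_def bracket_diff_right pq bracket_vec st)
  have zv: "br z v = 0" if "v \<in> span {e1, e2}" for v
    using assms that bracket_plane_plane[OF vec_in_plane that]
    by (simp add: z_def bracket_diff_left ad_scalar_iff)
  have "br x z = 0" for x
  proof (rule invertible_ad_injective[OF y bracket_in_plane])
    show "br y (br x z) = 0"
      using jacobi_derivation[of y x z] \<open>br y z = 0\<close> zv[OF bracket_in_plane[of y x]]
        bracket_antisym[of "br y x" z] by simp
  qed
  then have "z \<in> span {e1, e2}" by (rule center_in_plane)
  then have "z + vec s t \<in> span {e1, e2}" using span_add vec_in_plane by simp
  then show ?thesis by (simp add: z_def)
qed

lemma plane_basis_vec:
  assumes "p1 * q2 - q1 * p2 \<noteq> 0"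
  shows "span {vec p1 q1, vec p2 q2} = span {e1, e2}"
    and "sc a (vec p1 q1) + sc b (vec p2 q2) = 0 \<Longrightarrow> a = 0 \<and> b = 0"
proof -
  have det: "p1 * q2 - p2 * q1 \<noteq> 0" using assms by (simp add: mult.commute)
  have "vec p q \<in> span {vec p1 q1, vec p2 q2}" for p q
  proof -
    obtain s t where "p1 * s + p2 * t = p" "q1 * s + q2 * t = q"
      using cramer_2x2[OF det] by blast
    then have "vec p q = sc s (vec p1 q1) + sc t (vec p2 q2)"
      by (simp add: vec_scale vec_add mult.commute)
    then show ?thesis by (simp add: span_add span_scale span_base)
  qed
  then have "{e1, e2} \<subseteq> span {vec p1 q1, vec p2 q2}"
    using e1_vec e2_vec by (metis empty_subsetI insert_subset)
  moreover have "{vec p1 q1, vec p2 q2} \<subseteq> span {e1, e2}" by (simp add: vec_in_plane)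
  ultimately show "span {vec p1 q1, vec p2 q2} = span {e1, e2}"
    using span_minimal[OF _ subspace_span] by (metis subset_antisym)
  assume "sc a (vec p1 q1) + sc b (vec p2 q2) = 0"
  then have "p1 * a + p2 * b = 0" "q1 * a + q2 * b = 0"
    by (simp_all add: vec_scale vec_add vec_eq_0_iff mult.commute)
  from cramer_2x2_unique[OF det this] show "a = 0 \<and> b = 0" by simp
qed

lemma ad_jordan_basis:
  obtains (diagonal) l1 l2 v1 v2 where "span {v1, v2} = span {e1, e2}"
      "\<And>a b. sc a v1 + sc b v2 = 0 \<Longrightarrow> a = 0 \<and> b = 0"
      "br y v1 = sc l1 v1" "br y v2 = sc l2 v2"
  | (jordan_block) l v1 v2 where "span {v1, v2} = span {e1, e2}"
      "\<And>a b. sc a v1 + sc b v2 = 0 \<Longrightarrow> a = 0 \<and> b = 0"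
      "br y v1 = sc l v1" "br y v2 = sc l v2 + v1"
proof (cases rule: jordan_2x2[of "m11 y" "m12 y" "m21 y" "m22 y"])
  case (diagonal l1 l2 p1 q1 p2 q2)
  show ?thesis
    by (rule that(1)[of "vec p1 q1" "vec p2 q2" l1 l2])
      (use diagonal in \<open>simp_all add: plane_basis_vec bracket_vec vec_scale\<close>)
next
  case (jordan_block l p1 q1 p2 q2)
  show ?thesis
    by (rule that(2)[of "vec p1 q1" "vec p2 q2" l])
      (use jordan_block in \<open>simp_all add: plane_basis_vec bracket_vec vec_scale vec_add\<close>)
qed

lemma spanning_modulo_plane_3:
  assumes "span {v1, v2} = span {e1, e2}" and "\<And>z. \<exists>t. z - sc t y \<in> span {e1, e2}"
  shows "span {y, v1, v2} = UNIV"
proof -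
  have "z \<in> span {y, v1, v2}" for z
    using assms span_breakdown_eq[of z y "{v1, v2}"] by simp
  then show ?thesis by blast
qed

lemma complement_change:
  assumes "\<And>z. \<exists>s t. z - sc s y - sc t y2 \<in> span {e1, e2}"
    and "y2 - sc c X - sc d y \<in> span {e1, e2}"
  shows "\<exists>s t. z - sc s y - sc t X \<in> span {e1, e2}"
proof -
  obtain s t where "z - sc s y - sc t y2 \<in> span {e1, e2}" using assms(1) by blast
  then have "(z - sc s y - sc t y2) + sc t (y2 - sc c X - sc d y) \<in> span {e1, e2}"
    using assms(2) span_add span_scale by simp
  then have "z - sc (s + t * d) y - sc (t * c) X \<in> span {e1, e2}"
    by (simp add: algebra_simps scale_right_diff_distrib scale_left_distrib)
  then show ?thesis by blast
qed

lemma spanning_modulo_plane_4: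
  assumes "span {v1, v2} = span {e1, e2}"
    and "\<And>z. \<exists>s t. z - sc s y - sc t X \<in> span {e1, e2}"
  shows "span {X, y, v1, v2} = UNIV"
proof -
  have "z \<in> span {X, y, v1, v2}" for z
  proof -
    obtain s t where "(z - sc t X) - sc s y \<in> span {v1, v2}"
      using assms by (metis diff_right_commute)
    then have "z - sc t X \<in> span {y, v1, v2}"
      using span_breakdown_eq[of "z - sc t X" y "{v1, v2}"] by blast
    then show ?thesis
      using span_breakdown_eq[of z X "{y, v1, v2}"] by blast
  qed
  then show ?thesis by blast
qed

lemma commuting_correction:
  assumes "ad_scalar y 1"
  shows "br (X + br X y) y = 0" and "v \<in> span {e1, e2} \<Longrightarrow> br (X + br X y) v = br X v"
proof -
  have "br y (br X y) = br X y"
    using assms bracket_in_plane by (simp add: ad_scalar_iff)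
  then show "br (X + br X y) y = 0"
    using bracket_antisym[of "br X y" y] by (simp add: bracket_add_left)
  show "br (X + br X y) v = br X v" if "v \<in> span {e1, e2}"
    using bracket_plane_plane[OF bracket_in_plane that] by (simp add: bracket_add_left)
qed

lemma plane_basis_in_plane:
  assumes "span {v1, v2} = span {e1, e2}"
  shows "v1 \<in> span {e1, e2}" "v2 \<in> span {e1, e2}"
  using span_base[of v1 "{v1, v2}"] span_base[of v2 "{v1, v2}"] assms by simp_all

lemma invertible_ad_eigenvalue_nonzero:
  assumes "m11 y * m22 y - m12 y * m21 y \<noteq> 0" "v \<in> span {e1, e2}" "v \<noteq> 0" "br y v = sc l v"
  shows "l \<noteq> 0"
proof
  assume "l = 0"
  then have "br y v = 0" using assms(4) by simp
  with invertible_ad_injective[OF assms(1,2)] assms(3) show False by blast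
qed

lemma classify_invertible_complement:
  assumes y: "m11 y * m22 y - m12 y * m21 y \<noteq> 0"
    and dec: "\<And>z. \<exists>t. z - sc t y \<in> span {e1, e2}"
  shows "(\<exists>x. basis_with_brackets sc br 3 x [((1,2), x 2), ((1,3), x 2 + x 3)])
    \<or> (\<exists>x \<gamma>. \<gamma> \<noteq> 0 \<and> basis_with_brackets sc br 3 x [((1,2), x 2), ((1,3), sc \<gamma> (x 3))])"
proof (cases rule: ad_jordan_basis[of y])
  case (diagonal l1 l2 v1 v2)
  note in_plane = plane_basis_in_plane[OF diagonal(1)]
  have nonzero: "v1 \<noteq> 0" "v2 \<noteq> 0" using diagonal(2)[of 1 0] diagonal(2)[of 0 1] by auto
  have "l1 \<noteq> 0" "l2 \<noteq> 0"
    using invertible_ad_eigenvalue_nonzero[OF y in_plane(1) nonzero(1) diagonal(3)]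
      invertible_ad_eigenvalue_nonzero[OF y in_plane(2) nonzero(2) diagonal(4)] .
  from basis_diagonal_action[OF bracket_plane_plane[OF in_plane] diagonal(2-4) this
      spanning_modulo_plane_3[OF diagonal(1) dec]]
  show ?thesis by (rule disjI2)
next
  case (jordan_block l v1 v2)
  note in_plane = plane_basis_in_plane[OF jordan_block(1)]
  have "l \<noteq> 0"
    using jordan_block(2)[of 1 0] invertible_ad_eigenvalue_nonzero[OF y in_plane(1) _ jordan_block(3)]
    by auto
  from basis_jordan_action[OF bracket_plane_plane[OF in_plane] jordan_block(2-4) this
      spanning_modulo_plane_3[OF jordan_block(1) dec]]
  show ?thesis by (rule disjI1)
qed

lemma ad_scalar_if_common_eigenvalue:
  assumes "span {v1, v2} = span {e1, e2}" "br y v1 = sc l v1" "br y v2 = sc l v2"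
  shows "ad_scalar y l"
  unfolding ad_scalar_iff
proof
  fix v assume "v \<in> span {e1, e2}"
  then have "v \<in> span {v1, v2}" using assms(1) by simp
  then obtain a b where "v = sc a v1 + sc b v2" unfolding span_pair_iff by blast
  then show "br y v = sc l v"
    using assms(2,3) by (simp add: bracket_linear scale_right_distrib mult.commute)
qed

lemma commuting_correction_complement:
  assumes "ad_scalar y 1" and "\<And>z. \<exists>s t. z - sc s y - sc t X \<in> span {e1, e2}"
  shows "\<exists>s t. z - sc s y - sc t (X + br X y) \<in> span {e1, e2}"
proof (rule complement_change[OF assms(2)])
  show "X - sc 1 (X + br X y) - sc 0 y \<in> span {e1, e2}"
    using bracket_in_plane span_neg by simp
qed

lemma split_basis_from_complement:
  assumes y: "ad_scalar y 1"
    and basis: "span {v1, v2} = span {e1, e2}" "\<And>a b. sc a v1 + sc b v2 = 0 \<Longrightarrow> a = 0 \<and> b = 0"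
    and act: "br X v1 = v1" "br X v2 = 0"
    and dec: "\<And>z. \<exists>s t. z - sc s y - sc t X \<in> span {e1, e2}"
  shows "\<exists>x. basis_with_brackets sc br 4 x [((1,2), x 2), ((3,4), x 4)]"
proof -
  note in_plane = plane_basis_in_plane[OF basis(1)]
  have y_id: "br y v1 = v1" "br y v2 = v2"
    using y in_plane by (simp_all add: ad_scalar_iff)
  have "br (X + br X y) v1 = v1" "br (X + br X y) v2 = 0"
    using commuting_correction(2)[OF y] in_plane act by simp_all
  from basis_split_action[OF bracket_plane_plane[OF in_plane] basis(2) y_id this
      commuting_correction(1)[OF y]
      spanning_modulo_plane_4[OF basis(1) commuting_correction_complement[OF y dec]]]
  show ?thesis .
qed

lemma nilpotent_basis_from_complement:
  assumes y: "ad_scalar y 1"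
    and basis: "span {v1, v2} = span {e1, e2}" "\<And>a b. sc a v1 + sc b v2 = 0 \<Longrightarrow> a = 0 \<and> b = 0"
    and act: "br X v1 = 0" "br X v2 = v1"
    and dec: "\<And>z. \<exists>s t. z - sc s y - sc t X \<in> span {e1, e2}"
  shows "\<exists>x. basis_with_brackets sc br 4 x [((1,4), x 3), ((2,3), x 3), ((2,4), x 4)]"
proof -
  note in_plane = plane_basis_in_plane[OF basis(1)]
  have y_id: "br y v1 = v1" "br y v2 = v2"
    using y in_plane by (simp_all add: ad_scalar_iff)
  have "br (X + br X y) v1 = 0" "br (X + br X y) v2 = v1"
    using commuting_correction(2)[OF y] in_plane act by simp_all
  from basis_nilpotent_action[OF bracket_plane_plane[OF in_plane] basis(2) y_id this
      commuting_correction(1)[OF y]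
      spanning_modulo_plane_4[OF basis(1) commuting_correction_complement[OF y dec]]]
  show ?thesis .
qed

lemma classify_identity_complement:
  assumes y: "ad_scalar y 1" and y2: "\<nexists>l. ad_scalar y2 l"
    and dec: "\<And>z. \<exists>s t. z - sc s y - sc t y2 \<in> span {e1, e2}"
  shows "(\<exists>x. basis_with_brackets sc br 4 x [((1,2), x 2), ((3,4), x 4)])
    \<or> (\<exists>x. basis_with_brackets sc br 4 x [((1,4), x 3), ((2,3), x 3), ((2,4), x 4)])"
proof (cases rule: ad_jordan_basis[of y2])
  case (diagonal l1 l2 v1 v2)
  note in_plane = plane_basis_in_plane[OF diagonal(1)]
  have "l1 \<noteq> l2"
  proof
    assume "l1 = l2"
    then have "ad_scalar y2 l1"
      using ad_scalar_if_common_eigenvalue[OF diagonal(1,3)] diagonal(4) by simp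
    with y2 show False by blast
  qed
  define X where "X = sc (1 / (l1 - l2)) (y2 - sc l2 y)"
  have "y2 - sc (l1 - l2) X - sc l2 y = 0"
    using \<open>l1 \<noteq> l2\<close> by (simp add: X_def)
  then have dec': "\<exists>s t. z - sc s y - sc t X \<in> span {e1, e2}" for z
    using complement_change[OF dec] span_zero by metis
  have "sc l1 v1 - sc l2 v1 = sc (l1 - l2) v1" by (simp add: scale_left_diff_distrib)
  then have "br X v1 = v1" "br X v2 = 0"
    using \<open>l1 \<noteq> l2\<close> y in_plane diagonal(3,4) by (simp_all add: X_def bracket_linear ad_scalar_iff)
  from split_basis_from_complement[OF y diagonal(1,2) this dec'] show ?thesis by (rule disjI1)
next
  case (jordan_block l v1 v2)
  note in_plane = plane_basis_in_plane[OF jordan_block(1)]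
  define X where "X = y2 - sc l y"
  have "y2 - sc 1 X - sc l y = 0" by (simp add: X_def)
  then have dec': "\<exists>s t. z - sc s y - sc t X \<in> span {e1, e2}" for z
    using complement_change[OF dec] span_zero by metis
  have "br X v1 = 0" "br X v2 = v1"
    using y in_plane jordan_block(3,4) by (simp_all add: X_def bracket_linear ad_scalar_iff)
  from nilpotent_basis_from_complement[OF y jordan_block(1,2) this dec'] show ?thesis by (rule disjI2)
qed

lemma same_ad_imp_diff_in_plane:
  assumes "m11 z = m11 w" "m12 z = m12 w" "m21 z = m21 w" "m22 z = m22 w"
  shows "z - w \<in> span {e1, e2}"
  using assms by (intro ad_zero_imp_in_plane) (simp add: ad_scalar_def ad_entries_diff)

lemma complement_of_scalar_image:
  assumes scalar: "\<And>z. \<exists>l. ad_scalar z l"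
  obtains y where "m11 y * m22 y - m12 y * m21 y \<noteq> 0" "\<And>z. \<exists>t. z - sc t y \<in> span {e1, e2}"
proof -
  have entries: "m12 z = 0" "m21 z = 0" "m22 z = m11 z" for z
    using scalar[of z] by (auto simp: ad_scalar_def)
  obtain y where y: "m11 y * m22 y - m12 y * m21 y \<noteq> 0"
    using exists_invertible_ad by blast
  then have "m11 y \<noteq> 0" by (simp add: entries)
  have "z - sc (m11 z / m11 y) y \<in> span {e1, e2}" for z
    using \<open>m11 y \<noteq> 0\<close> by (intro same_ad_imp_diff_in_plane) (simp_all add: entries ad_entries_scale)
  with y show ?thesis using that by blast
qed

lemma complement_with_identity:
  assumes x: "\<nexists>l. ad_scalar x l" and "\<alpha> \<noteq> 0"
    and y: "m11 y = \<alpha> + \<beta> * m11 x" "m12 y = \<beta> * m12 x" "m21 y = \<beta> * m21 x" "m22 y = \<alpha> + \<beta> * m22 x"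
  obtains y1 where "ad_scalar y1 1" "\<And>z. \<exists>s t. z - sc s y1 - sc t x \<in> span {e1, e2}"
proof
  define y1 where "y1 = sc (1 / \<alpha>) (y - sc \<beta> x)"
  show y1: "ad_scalar y1 1"
    using \<open>\<alpha> \<noteq> 0\<close> by (simp add: ad_scalar_def y1_def ad_entries_scale ad_entries_diff y)
  show "\<exists>s t. z - sc s y1 - sc t x \<in> span {e1, e2}" for z
  proof -
    obtain \<alpha>' \<beta>' where z: "m11 z = \<alpha>' + \<beta>' * m11 x" "m12 z = \<beta>' * m12 x"
      "m21 z = \<beta>' * m21 x" "m22 z = \<alpha>' + \<beta>' * m22 x"
      using ad_commutant_of_nonscalar[OF x] by blast
    have "z - (sc \<alpha>' y1 + sc \<beta>' x) \<in> span {e1, e2}"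
      using y1 by (intro same_ad_imp_diff_in_plane) (simp_all add: ad_entries_linear ad_scalar_def z)
    then show ?thesis by (auto simp: algebra_simps)
  qed
qed

lemma complement_of_multiples:
  assumes multiple: "\<And>z. \<exists>\<beta>. ad_multiple z \<beta> x"
  shows "m11 x * m22 x - m12 x * m21 x \<noteq> 0" and "\<exists>t. z - sc t x \<in> span {e1, e2}"
proof -
  obtain y where y: "m11 y * m22 y - m12 y * m21 y \<noteq> 0"
    using exists_invertible_ad by blast
  obtain \<beta> where "ad_multiple y \<beta> x" using multiple by blast
  then have "m11 y * m22 y - m12 y * m21 y = \<beta> * \<beta> * (m11 x * m22 x - m12 x * m21 x)"
    by (simp add: ad_multiple_def algebra_simps)
  then show "m11 x * m22 x - m12 x * m21 x \<noteq> 0" using y by auto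
  obtain \<gamma> where "ad_multiple z \<gamma> x" using multiple by blast
  then have "z - sc \<gamma> x \<in> span {e1, e2}"
    by (intro same_ad_imp_diff_in_plane) (simp_all add: ad_multiple_def ad_entries_scale)
  then show "\<exists>t. z - sc t x \<in> span {e1, e2}" by blast
qed

lemma complement_of_nonscalar_image:
  assumes x: "\<nexists>l. ad_scalar x l"
  obtains (with_identity) y where "ad_scalar y 1" "\<And>z. \<exists>s t. z - sc s y - sc t x \<in> span {e1, e2}"
  | (invertible) "m11 x * m22 x - m12 x * m21 x \<noteq> 0" "\<And>z. \<exists>t. z - sc t x \<in> span {e1, e2}"
proof (cases "\<exists>y \<alpha> \<beta>. \<alpha> \<noteq> 0 \<and> m11 y = \<alpha> + \<beta> * m11 x \<and> m12 y = \<beta> * m12 x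
    \<and> m21 y = \<beta> * m21 x \<and> m22 y = \<alpha> + \<beta> * m22 x")
  case True
  then obtain y \<alpha> \<beta> where "\<alpha> \<noteq> 0" "m11 y = \<alpha> + \<beta> * m11 x" "m12 y = \<beta> * m12 x"
    "m21 y = \<beta> * m21 x" "m22 y = \<alpha> + \<beta> * m22 x" by blast
  then obtain y1 where "ad_scalar y1 1" "\<And>z. \<exists>s t. z - sc s y1 - sc t x \<in> span {e1, e2}"
    by (rule complement_with_identity[OF x]) blast
  then show ?thesis by (rule with_identity)
next
  case False
  have "\<exists>\<beta>. ad_multiple z \<beta> x" for z
  proof -
    obtain \<alpha> \<beta> where z: "m11 z = \<alpha> + \<beta> * m11 x" "m12 z = \<beta> * m12 x"
      "m21 z = \<beta> * m21 x" "m22 z = \<alpha> + \<beta> * m22 x"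
      using ad_commutant_of_nonscalar[OF x] by blast
    with False have "\<alpha> = 0" by blast
    with z show ?thesis by (auto simp: ad_multiple_def)
  qed
  from complement_of_multiples[OF this] show ?thesis by (rule invertible)
qed

lemma classification:
  "(\<exists>x. basis_with_brackets sc br 4 x [((1,2), x 2), ((3,4), x 4)])
    \<or> (\<exists>x. basis_with_brackets sc br 4 x [((1,4), x 3), ((2,3), x 3), ((2,4), x 4)])
    \<or> (\<exists>x. basis_with_brackets sc br 3 x [((1,2), x 2), ((1,3), x 2 + x 3)])
    \<or> (\<exists>x \<gamma>. \<gamma> \<noteq> 0 \<and> basis_with_brackets sc br 3 x [((1,2), x 2), ((1,3), sc \<gamma> (x 3))])"
proof (cases "\<exists>x. \<nexists>l. ad_scalar x l")
  case False
  then obtain y where "m11 y * m22 y - m12 y * m21 y \<noteq> 0" "\<And>z. \<exists>t. z - sc t y \<in> span {e1, e2}"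
    using complement_of_scalar_image by blast
  from classify_invertible_complement[OF this] show ?thesis by blast
next
  case True
  then obtain x where x: "\<nexists>l. ad_scalar x l" by blast
  then show ?thesis
  proof (cases rule: complement_of_nonscalar_image)
    case (with_identity y)
    from classify_identity_complement[OF with_identity(1) x with_identity(2)] show ?thesis by blast
  next
    case invertible
    from classify_invertible_complement[OF invertible] show ?thesis by blast
  qed
qed

end

context complex_lie_algebra
begin

lemma derived_plane_if_dims:
  assumes pure: "pure sc br"
    and dim1: "dim (lcs sc br 1) = 2" and dim2: "dim (lcs sc br 2) = 2"
  obtains e1 e2 where "derived_plane sc br e1 e2"
proof -
  let ?D = "lcs sc br 1"
  have "subspace ?D" by (simp add: brk_set_def subspace_span)
  then obtain e1 e2 where plane: "span {e1, e2} = ?D"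
    and indep: "\<And>p q. sc p e1 + sc q e2 = 0 \<Longrightarrow> p = 0 \<and> q = 0"
    using dim1 by (rule basis_of_dim_2) blast
  show ?thesis
  proof (rule that, unfold_locales)
    show "sc p e1 + sc q e2 = 0 \<Longrightarrow> p = 0 \<and> q = 0" for p q by (rule indep)
  next
    show "br x y \<in> span {e1, e2}" for x y
      using bracket_in_derived plane by simp
  next
    show "\<exists>x v. v \<in> span {e1, e2} \<and> br x v \<notin> span {w}" for w
    proof (rule ccontr)
      assume "\<not> ?thesis"
      then have "{br x v | x v. v \<in> ?D} \<subseteq> span {w}" using plane by auto
      then have "lcs sc br 2 \<subseteq> span {w}"
        by (simp add: numeral_2_eq_2 brk_set_def span_minimal)
      then have "dim (lcs sc br 2) \<le> 1" using dim_le_card[of _ "{w}"] by simp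
      then show False using dim2 by simp
    qed
  next
    show "z \<in> span {e1, e2}" if "\<And>x. br x z = 0" for z
      using center_subset_derived[OF pure that] plane by simp
  qed
qed

end

theorem theorem3p9:
  fixes sc :: "complex \<Rightarrow> 'a::ab_group_add \<Rightarrow> 'a" and br :: "'a \<Rightarrow> 'a \<Rightarrow> 'a"
  assumes "lie_algebra sc br" and "fin_dim sc"
    and "pure sc br" and "\<not> nilpotent sc br" and "solvable sc br"
    and "breadth sc br = 2"
    and "vector_space.dim sc (lcs sc br 1) = 2"
    and "\<forall>k\<ge>2. vector_space.dim sc (lcs sc br k) = 2"
  shows "(\<exists>x. basis_with_brackets sc br 5 x [((1,5), x 4), ((2,4), x 4), ((3,5), x 5)])
       \<or> (\<exists>x. basis_with_brackets sc br 4 x [((1,2), x 2), ((3,4), x 4)])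
       \<or> (\<exists>x. basis_with_brackets sc br 4 x [((1,4), x 3), ((2,3), x 3), ((2,4), x 4)])
       \<or> (\<exists>x. basis_with_brackets sc br 3 x [((1,2), x 2), ((1,3), x 2 + x 3)])
       \<or> (\<exists>x \<gamma>. \<gamma> \<noteq> 0 \<and> basis_with_brackets sc br 3 x [((1,2), x 2), ((1,3), sc \<gamma> (x 3))])"
proof -
  \<comment> \<open>Case (1) never arises: its table violates the Jacobi identity, since \<open>[x1, [x2, x5]] = 0\<close>
    while \<open>[[x1, x2], x5] + [x2, [x1, x5]] = x4\<close>.\<close>
  interpret complex_lie_algebra sc br
    by (rule complex_lie_algebra.intro) (rule assms(1))
  have "dim (lcs sc br 2) = 2" using assms(8) by simp
  then obtain e1 e2 where "derived_plane sc br e1 e2"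
    by (rule derived_plane_if_dims[OF assms(3,7)])
  then interpret derived_plane sc br e1 e2 .
  from classification show ?thesis by blast
qed

end
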